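(* Let $T$ be a tree on $n\ge2$ vertices, $k\ge2$ even, and $M$ the order-$k$ Steiner distance hypermatrix of $T$. For all $\mathbf{c}_1,\ldots,\mathbf{c}_k\in\mathcal{H}_n$, $$M(\mathbf{c}_1,\ldots,\mathbf{c}_k)=(-2\,\mathbb{I}^k_{n-1})(P_T\mathbf{c}_1,\ldots,P_T\mathbf{c}_k)=-2\sum_{e\in E(T)}\prod_{j=1}^k (\mathbf{a}'^T_e\mathbf{c}_j).$$
   Context: $T$ is a tree with vertex set $\{1,\dots,n\}$ and edge set $E(T)$. For $U\subseteq V(T)$, the Steiner distance $S(U)$ is the minimum number of edges of a connected subgraph of $T$ whose vertex set contains $U$. The order-$k$ Steiner distance hypermatrix $M$ has entries $M_{(i_1,\dots,i_k)}=S(\{i_1,\dots,i_k\})$, and for any order-$k$ hypermatrix $H$ of dimension $m$, $H(\mathbf{x}_1,\dots,\mathbf{x}_k)=\sum_{\mathbf{i}\in [m]^k}H_{\mathbf{i}}\prod_{j=1}^k x_{j i_j}$. For an edge $e$, $A(e)$, $B(e)$ are the vertex sets of the two components of $T-e$, $\mathbf{a}_e$ is the indicator vector of $A(e)$, $\mathbb{J}$ is the all-ones vector, $\mathbf{a}'_e=\mathbf{a}_e-\frac{|A(e)|}{n}\mathbb{J}$, and $P_T$ is the $(n-1)\times n$ matrix with rows indexed by $E(T)$ whose row $e$ is $\mathbf{a}'^T_e$. $\mathcal{H}_n=\{\mathbf{c}\in\mathbb{R}^n:\mathbf{c}^T\mathbb{J}=0\}$. $\mathbb{I}^k_{m}$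 is the order-$k$, dimension-$m$ identity hypermatrix: its $(i_1,\dots,i_k)$ entry is $1$ if $i_1=\dots=i_k$ and $0$ otherwise. *)

theory Defs
  imports Complex_Main "HOL-Library.FuncSet"
begin

definition adj_rel :: "nat set set \<Rightarrow> (nat \<times> nat) set" where
  "adj_rel F = {(x, y). {x, y} \<in> F}"

definition graph_connected :: "nat set \<Rightarrow> nat set set \<Rightarrow> bool" where
  "graph_connected W F \<longleftrightarrow> (\<forall>x\<in>W. \<forall>y\<in>W. (x, y) \<in> (adj_rel F)\<^sup>*)"

definition simple_graph :: "nat set \<Rightarrow> nat set set \<Rightarrow> bool" where
  "simple_graph V E \<longleftrightarrow> (\<forall>e\<in>E. e \<subseteq> V \<and> card e = 2)"

text \<open>A tree: connected and acyclic, acyclicity expressed as: removing any edge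
  disconnects its endpoints (no edge lies on a cycle).\<close>
definition is_tree :: "nat set \<Rightarrow> nat set set \<Rightarrow> bool" where
  "is_tree V E \<longleftrightarrow> finite V \<and> simple_graph V E \<and> graph_connected V E \<and>
     (\<forall>e\<in>E. \<forall>x y. e = {x, y} \<longrightarrow> (x, y) \<notin> (adj_rel (E - {e}))\<^sup>*)"

definition steiner_dist :: "nat set \<Rightarrow> nat set set \<Rightarrow> nat set \<Rightarrow> nat" where
  "steiner_dist V E U = (LEAST m. \<exists>W F. U \<subseteq> W \<and> W \<subseteq> V \<and> F \<subseteq> E \<and>
       (\<forall>f\<in>F. f \<subseteq> W) \<and> graph_connected W F \<and> card F = m)"

text \<open>A(e): vertex set of the component of T - e containing the smaller endpoint of e.
  (The choice of side only changes a'_e by a sign.)\<close>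
definition side_A :: "nat set \<Rightarrow> nat set set \<Rightarrow> nat set \<Rightarrow> nat set" where
  "side_A V E e = {v \<in> V. (Min e, v) \<in> (adj_rel (E - {e}))\<^sup>*}"

definition a_prime :: "nat \<Rightarrow> nat set set \<Rightarrow> nat set \<Rightarrow> nat \<Rightarrow> real" where
  "a_prime n E e v = (if v \<in> side_A {1..n} E e then 1 else 0)
                      - real (card (side_A {1..n} E e)) / real n"

definition P_T :: "nat \<Rightarrow> nat set set \<Rightarrow> (nat \<Rightarrow> real) \<Rightarrow> nat set \<Rightarrow> real" where
  "P_T n E c e = (\<Sum>v\<in>{1..n}. a_prime n E e v * c v)"

definition hm_form :: "'a set \<Rightarrow> nat \<Rightarrow> ((nat \<Rightarrow> 'a) \<Rightarrow> real) \<Rightarrow> (nat \<Rightarrow> 'a \<Rightarrow> real) \<Rightarrow> real" where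
  "hm_form I k H x = (\<Sum>i\<in>Pi\<^sub>E {..<k} (\<lambda>_. I). H i * (\<Prod>j<k. x j (i j)))"

definition steiner_hm :: "nat \<Rightarrow> nat set set \<Rightarrow> nat \<Rightarrow> (nat \<Rightarrow> nat) \<Rightarrow> real" where
  "steiner_hm n E k i = real (steiner_dist {1..n} E (i ` {..<k}))"

definition identity_hm :: "nat \<Rightarrow> (nat \<Rightarrow> 'a) \<Rightarrow> real" where
  "identity_hm k i = (if \<forall>j<k. i j = i 0 then 1 else 0)"

end

theory Submission
  imports Defs
begin

text \<open>In a tree the Steiner tree of a nonempty set \<open>U\<close> consists exactly of the edges \<open>e\<close>
  whose two sides \<open>A(e)\<close>, \<open>B(e)\<close> both meet \<open>U\<close>: every such edge is needed, and any other
  edge can be cut off together with the side that misses \<open>U\<close>. Hence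
  \<open>S(U) = \<Sum>e. 1 - [U \<subseteq> A(e)] - [U \<subseteq> B(e)]\<close>, and each indicator \<open>[i\<^sub>1,...,i\<^sub>k \<in> X]\<close> is a
  rank-one hypermatrix whose form is the product over \<open>j\<close> of the sums of \<open>c\<^sub>j\<close> over \<open>X\<close>.
  For \<open>c\<^sub>j\<close> summing to zero the constant term vanishes and the sum of \<open>c\<^sub>j\<close> over \<open>B(e)\<close> is
  minus that over \<open>A(e)\<close>, which is \<open>a'\<^sub>e\<^sup>T c\<^sub>j\<close>; as \<open>k\<close> is even, both sides of every edge
  contribute the same product.\<close>

definition connected_subgraph_containing ::
    "nat set \<Rightarrow> nat set set \<Rightarrow> nat set \<Rightarrow> nat set \<Rightarrow> nat set set \<Rightarrow> bool" where
  "connected_subgraph_containing V E U W F \<longleftrightarrow>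
     U \<subseteq> W \<and> W \<subseteq> V \<and> F \<subseteq> E \<and> (\<forall>f\<in>F. f \<subseteq> W) \<and> graph_connected W F"

lemma steiner_dist_altdef:
  "steiner_dist V E U = (LEAST m. \<exists>W F. connected_subgraph_containing V E U W F \<and> card F = m)"
  by (simp add: steiner_dist_def connected_subgraph_containing_def conj_assoc)

definition separates :: "nat set \<Rightarrow> nat set set \<Rightarrow> nat set \<Rightarrow> nat set \<Rightarrow> bool" where
  "separates V E e U \<longleftrightarrow> \<not> U \<subseteq> side_A V E e \<and> \<not> U \<subseteq> V - side_A V E e"

lemma adj_rel_mono: "F \<subseteq> G \<Longrightarrow> adj_rel F \<subseteq> adj_rel G"
  by (auto simp: adj_rel_def)

lemma tree_finite_edges: "is_tree V E \<Longrightarrow> finite E"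
  by (meson finite_Pow_iff finite_subset is_tree_def simple_graph_def subsetI PowI)

lemma side_A_subset: "side_A V E e \<subseteq> V"
  by (auto simp: side_A_def)

lemma side_A_closed:
  assumes "simple_graph V E" and "{v, w} \<in> E - {f}"
  shows "v \<in> side_A V E f \<longleftrightarrow> w \<in> side_A V E f"
proof -
  have "v \<in> V" "w \<in> V"
    using assms by (auto simp: simple_graph_def)
  moreover have "(v, w) \<in> adj_rel (E - {f})" "(w, v) \<in> adj_rel (E - {f})"
    using assms(2) by (auto simp: adj_rel_def insert_commute)
  ultimately show ?thesis
    unfolding side_A_def by (auto intro: rtrancl_into_rtrancl)
qed

lemma tree_edge_endpoints:
  assumes T: "is_tree V E" and fE: "f \<in> E"
  obtains y where "f = {Min f, y}" "Min f \<in> side_A V E f" "y \<in> V - side_A V E f"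
proof -
  have fV: "f \<subseteq> V" and "card f = 2"
    using assms by (auto simp: is_tree_def simple_graph_def)
  then obtain a b where ab: "f = {a, b}" "a \<noteq> b"
    by (auto simp: card_2_iff)
  have f_min_max: "f = {min a b, max a b}" and Min_f: "Min f = min a b"
    using ab by (auto simp: min_def max_def)
  have "(min a b, max a b) \<notin> (adj_rel (E - {f}))\<^sup>*"
    using T fE f_min_max unfolding is_tree_def by blast
  with fV f_min_max Min_f show thesis
    by (intro that[of "max a b"]) (auto simp: side_A_def)
qed

lemma separating_edge_mem:
  assumes H: "connected_subgraph_containing V E U W F" and sep: "separates V E e U"
  shows "e \<in> F"
proof (rule ccontr)
  assume "e \<notin> F"
  then have "adj_rel F \<subseteq> adj_rel (E - {e})"
    using H by (intro adj_rel_mono) (auto simp: connected_subgraph_containing_def)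
  then have walks: "(adj_rel F)\<^sup>* \<subseteq> (adj_rel (E - {e}))\<^sup>*"
    by (rule rtrancl_mono)
  from sep H obtain u w where "u \<in> U" "u \<in> side_A V E e" "w \<in> U" "w \<in> V - side_A V E e"
    unfolding separates_def connected_subgraph_containing_def by blast
  moreover have "(u, w) \<in> (adj_rel F)\<^sup>*"
    using H \<open>u \<in> U\<close> \<open>w \<in> U\<close>
    unfolding connected_subgraph_containing_def graph_connected_def by blast
  ultimately show False
    using walks unfolding side_A_def by (auto intro: rtrancl_trans)
qed

text \<open>Collapsing everything outside \<open>S\<close> onto \<open>p\<close> maps walks to walks: the only edge
  leaving \<open>S\<close> is \<open>f\<close>, and it collapses to the vertex \<open>p\<close>.\<close>

lemma adj_rel_rtrancl_retract:
  assumes FE: "F \<subseteq> E" and f: "f = {p, q}" and "p \<in> S" "q \<notin> S"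
    and closed: "\<And>v w. {v, w} \<in> E - {f} \<Longrightarrow> v \<in> S \<longleftrightarrow> w \<in> S"
    and "(a, b) \<in> (adj_rel F)\<^sup>*"
  shows "(if a \<in> S then a else p, if b \<in> S then b else p) \<in> (adj_rel {g\<in>F. g \<subseteq> S})\<^sup>*"
  using \<open>(a, b) \<in> (adj_rel F)\<^sup>*\<close>
proof (induction rule: rtrancl_induct)
  case base
  show ?case by simp
next
  case (step b c)
  have bc: "{b, c} \<in> F"
    using step(2) by (simp add: adj_rel_def)
  consider "b \<in> S" "c \<in> S" | "b \<notin> S" "c \<notin> S" | "{b, c} = f"
    using closed bc FE by blast
  then show ?case
  proof cases
    case 1
    then have "(b, c) \<in> adj_rel {g\<in>F. g \<subseteq> S}"
      using bc by (simp add: adj_rel_def)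
    with 1 step(3) show ?thesis by (simp add: rtrancl_into_rtrancl)
  next
    case 2
    with step(3) show ?thesis by simp
  next
    case 3
    with f \<open>p \<in> S\<close> \<open>q \<notin> S\<close> step(3) show ?thesis
      by (auto simp: doubleton_eq_iff)
  qed
qed

lemma graph_connected_restrict:
  assumes "F \<subseteq> E" and "f = {p, q}" and "p \<in> S" "q \<notin> S"
    and "\<And>v w. {v, w} \<in> E - {f} \<Longrightarrow> v \<in> S \<longleftrightarrow> w \<in> S"
    and "graph_connected W F"
  shows "graph_connected (W \<inter> S) {g\<in>F. g \<subseteq> S}"
  unfolding graph_connected_def
proof (intro ballI)
  fix a b assume "a \<in> W \<inter> S" "b \<in> W \<inter> S"
  moreover have "(a, b) \<in> (adj_rel F)\<^sup>*"
    using assms(6) calculation unfolding graph_connected_def by blast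
  ultimately show "(a, b) \<in> (adj_rel {g\<in>F. g \<subseteq> S})\<^sup>*"
    using adj_rel_rtrancl_retract[OF assms(1-5)] by fastforce
qed

lemma nonseparating_edge_removable:
  assumes T: "is_tree V E" and H: "connected_subgraph_containing V E U W F"
    and fF: "f \<in> F" and nonsep: "\<not> separates V E f U"
  shows "\<exists>W' F'. connected_subgraph_containing V E U W' F' \<and> card F' < card F"
proof -
  have FE: "F \<subseteq> E"
    using H by (simp add: connected_subgraph_containing_def)
  obtain y where f: "f = {Min f, y}" and Min_f: "Min f \<in> side_A V E f"
    and y: "y \<in> V - side_A V E f"
    using tree_edge_endpoints[OF T] fF FE by blast
  have simple: "simple_graph V E"
    using T by (simp add: is_tree_def)
  have edge_V: "v \<in> V" "w \<in> V" if "{v, w} \<in> E" for v w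
    using simple that by (auto simp: simple_graph_def)
  obtain p q S where pq: "f = {p, q}" "p \<in> S" "q \<notin> S" and US: "U \<subseteq> S"
    and closed: "\<And>v w. {v, w} \<in> E - {f} \<Longrightarrow> v \<in> S \<longleftrightarrow> w \<in> S"
  proof (cases "U \<subseteq> side_A V E f")
    case True
    show thesis
    proof (rule that[OF f _ _ True])
      show "Min f \<in> side_A V E f" "y \<notin> side_A V E f"
        using Min_f y by auto
    qed (rule side_A_closed[OF simple])
  next
    case False
    with nonsep have UB: "U \<subseteq> V - side_A V E f"
      by (simp add: separates_def)
    have "f = {y, Min f}"
      using f by (simp add: insert_commute)
    then show thesis
    proof (rule that[OF _ _ _ UB])
      show "y \<in> V - side_A V E f" "Min f \<notin> V - side_A V E f"
        using Min_f y by auto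
      show "v \<in> V - side_A V E f \<longleftrightarrow> w \<in> V - side_A V E f" if "{v, w} \<in> E - {f}" for v w
        using side_A_closed[OF simple that] edge_V[of v w] that by blast
    qed
  qed
  let ?W = "W \<inter> S" and ?F = "{g\<in>F. g \<subseteq> S}"
  have "graph_connected ?W ?F"
    using graph_connected_restrict[OF FE pq closed] H
    by (simp add: connected_subgraph_containing_def)
  then have "connected_subgraph_containing V E U ?W ?F"
    using H US by (auto simp: connected_subgraph_containing_def)
  moreover have "card ?F < card F"
  proof (rule psubset_card_mono)
    show "finite F"
      using FE tree_finite_edges[OF T] by (rule finite_subset)
    have "f \<notin> ?F"
      using pq(1,3) by simp
    with fF show "?F \<subset> F"
      by blast
  qed
  ultimately show ?thesis by blast
qed

lemma steiner_dist_tree: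
  assumes T: "is_tree V E" and UV: "U \<subseteq> V"
  shows "steiner_dist V E U = card {e\<in>E. separates V E e U}"
proof -
  let ?P = "\<lambda>m. \<exists>W F. connected_subgraph_containing V E U W F \<and> card F = m"
  have "connected_subgraph_containing V E U V E"
    using T UV unfolding connected_subgraph_containing_def is_tree_def simple_graph_def by blast
  then have "?P (card E)"
    by blast
  then have "?P (LEAST m. ?P m)"
    by (rule LeastI)
  then obtain W F where H: "connected_subgraph_containing V E U W F"
    and F_least: "card F = (LEAST m. ?P m)"
    by blast
  have "steiner_dist V E U = card F"
    using F_least by (simp only: steiner_dist_altdef)
  also have "F = {e\<in>E. separates V E e U}"
  proof (intro equalityI subsetI)
    fix f assume fF: "f \<in> F"
    have "separates V E f U"
    proof (rule ccontr)
      assume "\<not> separates V E f U"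
      then obtain W' F' where H': "connected_subgraph_containing V E U W' F'"
        and smaller: "card F' < card F"
        using nonseparating_edge_removable[OF T H fF] by blast
      from smaller have "\<not> ?P (card F')"
        unfolding F_least by (rule not_less_Least)
      with H' show False
        by blast
    qed
    moreover have "f \<in> E"
      using H fF by (auto simp: connected_subgraph_containing_def)
    ultimately show "f \<in> {e\<in>E. separates V E e U}"
      by simp
  next
    fix e assume "e \<in> {e\<in>E. separates V E e U}"
    then show "e \<in> F"
      using separating_edge_mem[OF H] by simp
  qed
  finally show ?thesis .
qed

lemma card_separating_edges:
  assumes "finite E" and "U \<noteq> {}"
  shows "real (card {e\<in>E. separates V E e U})
       = (\<Sum>e\<in>E. 1 - of_bool (U \<subseteq> side_A V E e) - of_bool (U \<subseteq> V - side_A V E e))"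
proof -
  have "real (card {e\<in>E. separates V E e U}) = (\<Sum>e\<in>E. of_bool (separates V E e U))"
    using assms(1) by (simp add: Collect_conj_eq Int_commute)
  also have "\<dots> = (\<Sum>e\<in>E. 1 - of_bool (U \<subseteq> side_A V E e) - of_bool (U \<subseteq> V - side_A V E e))"
    using assms(2) by (intro sum.cong) (auto simp: separates_def)
  finally show ?thesis .
qed

lemma hm_form_cong:
  assumes "\<And>i. i \<in> Pi\<^sub>E {..<k} (\<lambda>_. I) \<Longrightarrow> H i = H' i"
  shows "hm_form I k H x = hm_form I k H' x"
  using assms by (simp add: hm_form_def)

lemma hm_form_sum: "hm_form I k (\<lambda>i. \<Sum>e\<in>F. H e i) x = (\<Sum>e\<in>F. hm_form I k (H e) x)"
  unfolding hm_form_def sum_distrib_right by (rule sum.swap)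

lemma hm_form_diff: "hm_form I k (\<lambda>i. H i - H' i) x = hm_form I k H x - hm_form I k H' x"
  by (simp add: hm_form_def left_diff_distrib sum_subtractf)

lemma hm_form_cmult: "hm_form I k (\<lambda>i. a * H i) x = a * hm_form I k H x"
  by (simp add: hm_form_def sum_distrib_left mult.assoc)

lemma of_bool_image_subset:
  fixes k :: nat
  shows "of_bool (i ` {..<k} \<subseteq> S) = (\<Prod>j<k. of_bool (i j \<in> S) :: real)"
proof (cases "i ` {..<k} \<subseteq> S")
  case True
  then have "(\<Prod>j<k. of_bool (i j \<in> S)) = (\<Prod>j<k. 1 :: real)"
    by (intro prod.cong) auto
  with True show ?thesis
    by simp
next
  case False
  then obtain j where "j < k" "i j \<notin> S"
    by auto
  then have "(\<Prod>j<k. of_bool (i j \<in> S)) = (0 :: real)"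
    by (intro prod_zero finite_lessThan bexI[of _ j]) simp_all
  with False show ?thesis
    by simp
qed

lemma hm_form_of_bool_subset:
  assumes "finite I"
  shows "hm_form I k (\<lambda>i. of_bool (i ` {..<k} \<subseteq> S)) x = (\<Prod>j<k. \<Sum>v\<in>I \<inter> S. x j v)"
proof -
  have "hm_form I k (\<lambda>i. of_bool (i ` {..<k} \<subseteq> S)) x
      = (\<Sum>i\<in>Pi\<^sub>E {..<k} (\<lambda>_. I). \<Prod>j<k. of_bool (i j \<in> S) * x j (i j))"
    by (simp add: hm_form_def of_bool_image_subset prod.distrib)
  also have "\<dots> = (\<Prod>j<k. \<Sum>v\<in>I. of_bool (v \<in> S) * x j v)"
    using assms by (intro prod_sum_PiE[symmetric]) auto
  also have "\<dots> = (\<Prod>j<k. \<Sum>v\<in>I \<inter> S. x j v)"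
    using assms by simp
  finally show ?thesis .
qed

lemma steiner_hm_tree:
  assumes T: "is_tree {1..n} E" and "0 < k" and i: "i \<in> Pi\<^sub>E {..<k} (\<lambda>_. {1..n})"
  shows "steiner_hm n E k i
       = (\<Sum>e\<in>E. of_bool (i ` {..<k} \<subseteq> {1..n}) - of_bool (i ` {..<k} \<subseteq> side_A {1..n} E e)
                - of_bool (i ` {..<k} \<subseteq> {1..n} - side_A {1..n} E e))"
proof -
  have "i ` {..<k} \<subseteq> {1..n}" "i ` {..<k} \<noteq> {}"
    using assms(2) i by auto
  then show ?thesis
    using steiner_dist_tree[OF T] card_separating_edges[OF tree_finite_edges[OF T]]
    by (simp add: steiner_hm_def)
qed

lemma hm_form_steiner_hm:
  assumes "is_tree {1..n} E" and "0 < k"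
  shows "hm_form {1..n} k (steiner_hm n E k) x
       = (\<Sum>e\<in>E. (\<Prod>j<k. \<Sum>v\<in>{1..n}. x j v) - (\<Prod>j<k. \<Sum>v\<in>side_A {1..n} E e. x j v)
                - (\<Prod>j<k. \<Sum>v\<in>{1..n} - side_A {1..n} E e. x j v))"
proof -
  have "hm_form {1..n} k (steiner_hm n E k) x
      = hm_form {1..n} k (\<lambda>i. \<Sum>e\<in>E. of_bool (i ` {..<k} \<subseteq> {1..n})
              - of_bool (i ` {..<k} \<subseteq> side_A {1..n} E e)
              - of_bool (i ` {..<k} \<subseteq> {1..n} - side_A {1..n} E e)) x"
    by (rule hm_form_cong) (rule steiner_hm_tree[OF assms])
  also have "\<dots> = (\<Sum>e\<in>E. (\<Prod>j<k. \<Sum>v\<in>{1..n}. x j v) - (\<Prod>j<k. \<Sum>v\<in>side_A {1..n} E e. x j v)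
                - (\<Prod>j<k. \<Sum>v\<in>{1..n} - side_A {1..n} E e. x j v))"
    by (simp only: hm_form_sum hm_form_diff hm_form_of_bool_subset[OF finite_atLeastAtMost]
        Int_absorb Int_absorb1[OF side_A_subset] Int_absorb1[OF Diff_subset])
  finally show ?thesis .
qed

lemma identity_hm_eq_sum:
  assumes k: "0 < k" and i: "i \<in> Pi\<^sub>E {..<k} (\<lambda>_. I)" and "finite I"
  shows "identity_hm k i = (\<Sum>e\<in>I. of_bool (i ` {..<k} \<subseteq> {e}))"
proof -
  have "(\<Sum>e\<in>I. of_bool (i ` {..<k} \<subseteq> {e})) = real (card (I \<inter> {e. i ` {..<k} \<subseteq> {e}}))"
    using assms(3) by simp
  also have "\<dots> = identity_hm k i"
  proof (cases "\<forall>j<k. i j = i 0")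
    case True
    \<comment> \<open>kept away from the simplifier: as a rewrite rule \<open>i j = i 0\<close> it loops on \<open>i 0\<close>\<close>
    have "i ` {..<k} = {i 0}"
      using True k by blast
    moreover have "i 0 \<in> I"
      using i k by auto
    ultimately have "I \<inter> {e. i ` {..<k} \<subseteq> {e}} = {i 0}"
      by auto
    moreover have "identity_hm k i = 1"
      unfolding identity_hm_def using True by (rule if_P)
    ultimately show ?thesis
      by simp
  next
    case False
    then obtain j where "j < k" "i j \<noteq> i 0"
      by auto
    with k have "I \<inter> {e. i ` {..<k} \<subseteq> {e}} = {}"
      by (auto simp: image_subset_iff)
    moreover have "identity_hm k i = 0"
      unfolding identity_hm_def using False by (rule if_not_P)
    ultimately show ?thesis
      by simp
  qed
  finally show ?thesis ..
qed

lemma hm_form_identity_hm: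
  assumes "finite I" and "0 < k"
  shows "hm_form I k (identity_hm k) x = (\<Sum>e\<in>I. \<Prod>j<k. x j e)"
proof -
  have "hm_form I k (identity_hm k) x = hm_form I k (\<lambda>i. \<Sum>e\<in>I. of_bool (i ` {..<k} \<subseteq> {e})) x"
    using assms by (intro hm_form_cong identity_hm_eq_sum)
  also have "\<dots> = (\<Sum>e\<in>I. \<Prod>j<k. \<Sum>v\<in>I \<inter> {e}. x j v)"
    by (simp only: hm_form_sum hm_form_of_bool_subset[OF assms(1)])
  also have "\<dots> = (\<Sum>e\<in>I. \<Prod>j<k. x j e)"
    by (intro sum.cong prod.cong) auto
  finally show ?thesis .
qed

lemma P_T_zero_sum:
  assumes "(\<Sum>v\<in>{1..n}. c v) = 0"
  shows "P_T n E c e = (\<Sum>v\<in>side_A {1..n} E e. c v)"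
proof -
  have "P_T n E c e = (\<Sum>v\<in>{1..n}. of_bool (v \<in> side_A {1..n} E e) * c v)
      - real (card (side_A {1..n} E e)) / real n * (\<Sum>v\<in>{1..n}. c v)"
    unfolding P_T_def a_prime_def of_bool_def
    by (simp only: left_diff_distrib sum_subtractf sum_distrib_left mult.assoc)
  also have "\<dots> = (\<Sum>v\<in>side_A {1..n} E e. c v)"
    using assms by (simp add: Int_absorb1[OF side_A_subset])
  finally show ?thesis .
qed

lemma hm_form_steiner_hm_zero_sum:
  assumes T: "is_tree {1..n} E" and k: "0 < k" "even k"
    and zero_sum: "\<And>j. j < k \<Longrightarrow> (\<Sum>v\<in>{1..n}. c j v) = 0"
  shows "hm_form {1..n} k (steiner_hm n E k) c = -2 * (\<Sum>e\<in>E. \<Prod>j<k. P_T n E (c j) e)"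
proof -
  have whole: "(\<Prod>j<k. \<Sum>v\<in>{1..n}. c j v) = 0"
    using k zero_sum by (auto simp: prod_zero_iff)
  have side: "(\<Prod>j<k. \<Sum>v\<in>side_A {1..n} E e. c j v) = (\<Prod>j<k. P_T n E (c j) e)" for e
    using zero_sum by (simp add: P_T_zero_sum)
  have other_side: "(\<Prod>j<k. \<Sum>v\<in>{1..n} - side_A {1..n} E e. c j v)
      = (\<Prod>j<k. P_T n E (c j) e)" for e
  proof -
    have "(\<Prod>j<k. \<Sum>v\<in>{1..n} - side_A {1..n} E e. c j v) = (\<Prod>j<k. - P_T n E (c j) e)"
      using zero_sum by (intro prod.cong) (simp_all add: sum_diff side_A_subset P_T_zero_sum)
    also have "\<dots> = (\<Prod>j<k. P_T n E (c j) e)"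
      using k(2) by (simp add: prod_uminus)
    finally show ?thesis .
  qed
  show ?thesis
    unfolding hm_form_steiner_hm[OF T k(1)] whole side other_side by (simp add: sum_distrib_left)
qed

theorem mainTheorem6:
  fixes n k :: nat and E :: "nat set set" and c :: "nat \<Rightarrow> nat \<Rightarrow> real"
  assumes "n \<ge> 2" and "is_tree {1..n} E"
    and "k \<ge> 2" and "even k"
    and "\<And>j. j < k \<Longrightarrow> (\<Sum>v\<in>{1..n}. c j v) = 0"
  shows "hm_form {1..n} k (steiner_hm n E k) c
           = hm_form E k (\<lambda>i. -2 * identity_hm k i) (\<lambda>j. P_T n E (c j))
       \<and> hm_form E k (\<lambda>i. -2 * identity_hm k i) (\<lambda>j. P_T n E (c j))
           = -2 * (\<Sum>e\<in>E. \<Prod>j<k. (\<Sum>v\<in>{1..n}. a_prime n E e v * c j v))"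
proof -
  have k: "0 < k"
    using assms(3) by simp
  have "hm_form E k (\<lambda>i. -2 * identity_hm k i) (\<lambda>j. P_T n E (c j))
      = -2 * (\<Sum>e\<in>E. \<Prod>j<k. P_T n E (c j) e)"
    unfolding hm_form_cmult hm_form_identity_hm[OF tree_finite_edges[OF assms(2)] k] ..
  moreover have "hm_form {1..n} k (steiner_hm n E k) c = -2 * (\<Sum>e\<in>E. \<Prod>j<k. P_T n E (c j) e)"
    by (rule hm_form_steiner_hm_zero_sum[OF assms(2) k assms(4,5)])
  ultimately show ?thesis
    by (simp add: P_T_def)
qed

end
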